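(* Let $N$ be an odd prime, $V=\mathbb{Z}_N\times\mathbb{Z}_N$, and let $H$ be the channel operator $H(S)[n]=\sum_{k=1}^r\alpha_k\,e(\omega_k n)\,S[n-\tau_k]$ with $\alpha_k\in\mathbb{C}$, $\sum_k|\alpha_k|^2\le 1$, $(\tau_k,\omega_k)\in V$, and $\mathrm{supp}(H)=\{(\tau_k,\omega_k):k=1,\dots,r\}$. Let $L\neq M$ be two lines in $V$ such that $H$ is generic with respect to both $L$ and $M$. Let $C_L\in\mathcal{B}_L$, $C_M\in\mathcal{B}_M$ be chirps with associated characters $\psi_L:L\to\mathbb{C}^*$, $\psi_M:M\to\mathbb{C}^*$, i.e. $\pi(l)C_L=\psi_L(l)C_L$ for all $l\in L$ and $\pi(m)C_M=\psi_M(m)C_M$ for all $m\in M$. Define $h:L\times M\to\mathbb{C}$ by $$h(l,m)=\mathcal{A}(C_L,H(C_L))[m]\cdot\psi_L(l)-\mathcal{A}(C_M,H(C_M))[l]\cdot e(\Omega[l,m])\cdot\psi_M(m),$$ where $\Omega[(\tau,\omega),(\tau',\omega')]=\tau\omega'-\omega\tau'\in\mathbb{Z}_N$. If $l\in L$, $m\in M$ and $l+m\in\mathrm{supp}(H)$, then $h(l,m)=0$.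
   Context: $\mathcal{H}$ is the space of functions $\mathbb{Z}_N\to\mathbb{C}$ with inner product $\langle f,g\rangle=\sum_{n}f[n]\overline{g[n]}$; $e(t)=\exp(2\pi i t/N)$; $2^{-1}=(N+1)/2$. Heisenberg operators: $[\pi(\tau,\omega)f][n]=e(-2^{-1}\tau\omega)e(\omega n)f[n-\tau]$; ambiguity function: $\mathcal{A}(f,g)[\tau,\omega]=\langle\pi(\tau,\omega)f,g\rangle$. Lines in $V$: $L_a=\{(\tau,a\tau)\}$ ($a\in\mathbb{Z}_N$) and $L_\infty=\{(0,\omega)\}$. Chirp bases: $\mathcal{B}_{L_a}=\{C_{L_a,b}:b\in\mathbb{Z}_N\}$ with $C_{L_a,b}[n]=e(2^{-1}an^2-bn)/\sqrt{N}$, satisfying $\pi(\tau,a\tau)C_{L_a,b}=e(b\tau)C_{L_a,b}$; and $\mathcal{B}_{L_\infty}=\{\delta_b:b\in\mathbb{Z}_N\}$, satisfying $\pi(0,\omega)\delta_b=e(b\omega)\delta_b$. $H$ is generic with respect to a line $L$ if $u-v\notin L$ for all distinct $u,v\in\mathrm{supp}(H)$. *)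

theory Defs
  imports Complex_Main "HOL-Computational_Algebra.Primes"
begin

text \<open>Z_N is represented by integers taken modulo N; signals Z_N -> C are
  functions int => complex, always evaluated at representatives reduced mod N.\<close>

definition ee :: "nat \<Rightarrow> int \<Rightarrow> complex" where
  "ee N t = cis (2 * pi * of_int t / of_nat N)"

definition inv2 :: "nat \<Rightarrow> int" where
  "inv2 N = (int N + 1) div 2"

definition Vset :: "nat \<Rightarrow> (int \<times> int) set" where
  "Vset N = {0..<int N} \<times> {0..<int N}"

definition vadd :: "nat \<Rightarrow> int \<times> int \<Rightarrow> int \<times> int \<Rightarrow> int \<times> int" where
  "vadd N u v = ((fst u + fst v) mod int N, (snd u + snd v) mod int N)"

definition vsub :: "nat \<Rightarrow> int \<times> int \<Rightarrow> int \<times> int \<Rightarrow> int \<times> int" where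
  "vsub N u v = ((fst u - fst v) mod int N, (snd u - snd v) mod int N)"

definition Omega :: "int \<times> int \<Rightarrow> int \<times> int \<Rightarrow> int" where
  "Omega u v = fst u * snd v - snd u * fst v"

definition heis :: "nat \<Rightarrow> int \<times> int \<Rightarrow> (int \<Rightarrow> complex) \<Rightarrow> (int \<Rightarrow> complex)" where
  "heis N v f = (\<lambda>n. ee N (- (inv2 N * fst v * snd v)) * ee N (snd v * n)
                     * f ((n - fst v) mod int N))"

definition inner :: "nat \<Rightarrow> (int \<Rightarrow> complex) \<Rightarrow> (int \<Rightarrow> complex) \<Rightarrow> complex" where
  "inner N f g = (\<Sum>n\<in>{0..<int N}. f n * cnj (g n))"

definition ambig :: "nat \<Rightarrow> (int \<Rightarrow> complex) \<Rightarrow> (int \<Rightarrow> complex) \<Rightarrow> int \<times> int \<Rightarrow> complex" where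
  "ambig N f g v = inner N (heis N v f) g"

datatype line = LFin int | LInf

definition valid_line :: "nat \<Rightarrow> line \<Rightarrow> bool" where
  "valid_line N L = (case L of LFin a \<Rightarrow> 0 \<le> a \<and> a < int N | LInf \<Rightarrow> True)"

definition line_set :: "nat \<Rightarrow> line \<Rightarrow> (int \<times> int) set" where
  "line_set N L = (case L of
      LFin a \<Rightarrow> {(t, (a * t) mod int N) | t. 0 \<le> t \<and> t < int N}
    | LInf \<Rightarrow> {(0, w) | w. 0 \<le> w \<and> w < int N})"

definition chirp :: "nat \<Rightarrow> line \<Rightarrow> int \<Rightarrow> (int \<Rightarrow> complex)" where
  "chirp N L b = (case L of
      LFin a \<Rightarrow> (\<lambda>n. ee N (inv2 N * a * n^2 - b * n) / complex_of_real (sqrt (real N)))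
    | LInf \<Rightarrow> (\<lambda>n. if n mod int N = b then 1 else 0))"

definition chirp_basis :: "nat \<Rightarrow> line \<Rightarrow> (int \<Rightarrow> complex) set" where
  "chirp_basis N L = {chirp N L b | b. 0 \<le> b \<and> b < int N}"

definition channel :: "nat \<Rightarrow> nat \<Rightarrow> (nat \<Rightarrow> complex) \<Rightarrow> (nat \<Rightarrow> int) \<Rightarrow> (nat \<Rightarrow> int)
    \<Rightarrow> (int \<Rightarrow> complex) \<Rightarrow> (int \<Rightarrow> complex)" where
  "channel N r \<alpha> \<tau> \<omega> S = (\<lambda>n. \<Sum>k=1..r. \<alpha> k * ee N (\<omega> k * n) * S ((n - \<tau> k) mod int N))"

definition chsupp :: "nat \<Rightarrow> nat \<Rightarrow> (nat \<Rightarrow> int) \<Rightarrow> (nat \<Rightarrow> int) \<Rightarrow> (int \<times> int) set" where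
  "chsupp N r \<tau> \<omega> = {(\<tau> k mod int N, \<omega> k mod int N) | k. k \<in> {1..r}}"

definition generic :: "nat \<Rightarrow> (int \<times> int) set \<Rightarrow> line \<Rightarrow> bool" where
  "generic N S L = (\<forall>u\<in>S. \<forall>v\<in>S. u \<noteq> v \<longrightarrow> vsub N u v \<notin> line_set N L)"

end

theory Submission
  imports Defs
begin

text \<open>Writing the channel as \<open>H = \<Sum>\<^sub>k c\<^sub>k \<pi>(v\<^sub>k)\<close>, the ambiguity function of an
  eigenvector \<open>C\<close> of the line \<open>L\<close> is \<open>\<Sum>\<^sub>k conj c\<^sub>k \<langle>\<pi>(m)C, \<pi>(v\<^sub>k)C\<rangle>\<close>.
  Since \<open>\<pi>(x)\<close> (\<open>x \<in> L\<close>) is unitary, fixes \<open>C\<close> up to a unimodular scalar, and commutes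
  with \<open>\<pi>(u)\<close> up to \<open>e(-\<Omega>(x,u))\<close>, the inner product \<open>\<langle>\<pi>(m)C, \<pi>(v)C\<rangle>\<close> vanishes unless
  \<open>v - m\<close> is symplectically orthogonal to \<open>L\<close>, i.e. lies in \<open>L\<close>.  By genericity, for
  \<open>l + m\<close> in the support only the terms with \<open>v\<^sub>k = l + m\<close> survive, each equal to
  \<open>e(\<Phi>(m,l)) conj \<psi>\<^sub>L(l)\<close> with the Heisenberg cocycle \<open>\<Phi>\<close>.  Doing the same for \<open>M\<close> with
  the roles of \<open>l\<close> and \<open>m\<close> exchanged, both sides of the claim become the same multiple of
  \<open>e(\<Phi>(m,l)) = e(\<Phi>(l,m) + \<Omega>(l,m))\<close>.\<close>

lemma ee_add: "ee N (a + b) = ee N a * ee N b"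
  unfolding ee_def by (simp add: cis_mult distrib_left add_divide_distrib)

lemma ee_zero [simp]: "ee N 0 = 1"
  unfolding ee_def by simp

lemma ee_minus: "ee N (- a) * ee N a = 1"
  by (metis ee_add ee_zero add.left_inverse)

lemma ee_cnj: "cnj (ee N t) = ee N (- t)"
  unfolding ee_def by (simp add: cis_cnj)

lemma ee_mult_cnj: "ee N t * cnj (ee N t) = 1"
  by (simp add: ee_cnj) (metis ee_minus mult.commute)

lemma ee_cong:
  assumes "N > 0" "a mod int N = b mod int N"
  shows "ee N a = ee N b"
proof -
  obtain k where k: "a = b + int N * k"
    using assms(2) by (metis mod_eq_dvd_iff dvd_def add_diff_cancel_left' diff_add_cancel add.commute)
  have "2 * pi * of_int (int N * k) / of_nat N = 2 * pi * of_int k"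
    using assms(1) by simp
  then have "ee N (int N * k) = 1"
    unfolding ee_def by simp
  then show ?thesis
    unfolding k ee_add by simp
qed

lemma ee_neq_1:
  assumes "N > 0" "\<not> int N dvd t"
  shows "ee N t \<noteq> 1"
proof
  assume "ee N t = 1"
  then have "cos (2 * pi * of_int t / of_nat N) = 1"
    unfolding ee_def by (metis cis.sel(1) one_complex.sel(1))
  then obtain k :: int where "2 * pi * of_int t / of_nat N = of_int k * 2 * pi"
    using cos_one_2pi_int by blast
  then have "of_int t = real N * of_int k"
    using assms(1) by (simp add: field_simps)
  then have "t = int N * k"
    by (metis of_int_eq_iff of_int_mult of_int_of_nat_eq)
  with assms(2) show False by simp
qed

lemma vadd_commute: "vadd N u v = vadd N v u"
  unfolding vadd_def by (simp add: add.commute)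

definition heis_cocycle :: "nat \<Rightarrow> int \<times> int \<Rightarrow> int \<times> int \<Rightarrow> int" where
  "heis_cocycle N a b = inv2 N * (fst a * snd b + fst b * snd a) - fst a * snd b"

lemma heis_cocycle_swap: "heis_cocycle N a b + Omega a b = heis_cocycle N b a"
  unfolding heis_cocycle_def Omega_def by (simp add: algebra_simps)

lemma heis_cong:
  assumes "N > 0" "fst a mod int N = fst b mod int N" "snd a mod int N = snd b mod int N"
  shows "heis N a = heis N b"
proof -
  have "fst a * snd a mod int N = fst b * snd b mod int N"
    by (metis assms(2,3) mod_mult_eq)
  then have "inv2 N * fst a * snd a mod int N = inv2 N * fst b * snd b mod int N"
    by (metis mult.assoc mod_mult_right_eq)
  then have "(- (inv2 N * fst a * snd a)) mod int N = (- (inv2 N * fst b * snd b)) mod int N"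
    by (metis mod_minus_eq)
  then have "ee N (- (inv2 N * fst a * snd a)) = ee N (- (inv2 N * fst b * snd b))"
    by (rule ee_cong[OF assms(1)])
  moreover have "ee N (snd a * n) = ee N (snd b * n)" for n
    by (rule ee_cong[OF assms(1)]) (metis assms(3) mod_mult_left_eq)
  moreover have "(n - fst a) mod int N = (n - fst b) mod int N" for n
    using assms(2) by (metis mod_diff_right_eq)
  ultimately show ?thesis
    unfolding heis_def by (simp add: fun_eq_iff)
qed

lemma heis_mod: "N > 0 \<Longrightarrow> heis N (fst v mod int N, snd v mod int N) = heis N v"
  by (rule heis_cong) simp_all

lemma heis_comp:
  assumes "N > 0"
  shows "heis N a (heis N b f) n = ee N (heis_cocycle N a b) * heis N (vadd N a b) f n"
proof -
  obtain a1 a2 b1 b2 where ab: "a = (a1, a2)" "b = (b1, b2)" by force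
  define h where "h = inv2 N"
  have e1: "ee N (b2 * ((n - a1) mod int N)) = ee N (b2 * (n - a1))"
    by (rule ee_cong[OF assms]) (simp add: mod_mult_right_eq)
  have e2: "((n - a1) mod int N - b1) mod int N = (n - (a1 + b1)) mod int N"
    by (simp add: mod_diff_left_eq diff_diff_eq)
  have "heis N a (heis N b f) n
      = ee N (- (h * a1 * a2) + a2 * n + (- (h * b1 * b2)) + b2 * (n - a1))
          * f ((n - (a1 + b1)) mod int N)"
    unfolding heis_def ab h_def fst_conv snd_conv e1 e2 by (simp only: ee_add mult_ac)
  also have "- (h * a1 * a2) + a2 * n + (- (h * b1 * b2)) + b2 * (n - a1)
      = h * (a1 * b2 + b1 * a2) - a1 * b2 + (- (h * (a1 + b1) * (a2 + b2))) + (a2 + b2) * n"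
    by (simp add: algebra_simps)
  also have "ee N \<dots> * f ((n - (a1 + b1)) mod int N)
      = ee N (heis_cocycle N a b) * heis N (a1 + b1, a2 + b2) f n"
    unfolding heis_def ab h_def heis_cocycle_def fst_conv snd_conv by (simp only: ee_add mult_ac)
  also have "heis N (a1 + b1, a2 + b2) = heis N (vadd N a b)"
    using heis_mod[OF assms, of "(a1 + b1, a2 + b2)"] by (simp add: vadd_def ab)
  finally show ?thesis .
qed

lemma heis_commute:
  assumes "N > 0"
  shows "heis N x (heis N a f) n = ee N (- Omega x a) * heis N a (heis N x f) n"
proof -
  have "ee N (heis_cocycle N x a) = ee N (- Omega x a) * ee N (heis_cocycle N a x)"
    by (metis heis_cocycle_swap ee_add add.commute add_diff_cancel_right' uminus_add_conv_diff)
  then show ?thesis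
    using heis_comp[OF assms, of x a f n] heis_comp[OF assms, of a x f n]
    by (simp add: vadd_commute)
qed

lemma heis_scale: "heis N v (\<lambda>n. c * f n) = (\<lambda>n. c * heis N v f n)"
  unfolding heis_def by (simp add: fun_eq_iff mult_ac)

lemma sum_mod_shift:
  assumes "N > 0"
  shows "(\<Sum>n\<in>{0..<int N}. F ((n - c) mod int N)) = (\<Sum>n\<in>{0..<int N}. F n)"
proof -
  have "bij_betw (\<lambda>n. (n - c) mod int N) {0..<int N} {0..<int N}"
  proof (rule bij_betw_byWitness[where f' = "\<lambda>n. (n + c) mod int N"])
    show "\<forall>x\<in>{0..<int N}. ((x - c) mod int N + c) mod int N = x"
      by (auto simp: mod_add_left_eq)
    show "\<forall>y\<in>{0..<int N}. ((y + c) mod int N - c) mod int N = y"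
      by (auto simp: mod_diff_left_eq)
  qed (use assms in auto)
  then show ?thesis by (rule sum.reindex_bij_betw)
qed

lemma inner_scale_left: "inner N (\<lambda>n. c * f n) g = c * inner N f g"
  unfolding inner_def by (simp add: sum_distrib_left mult_ac)

lemma inner_scale_right: "inner N f (\<lambda>n. c * g n) = cnj c * inner N f g"
  unfolding inner_def by (simp add: sum_distrib_left mult_ac)

lemma inner_sum_right: "inner N f (\<lambda>n. \<Sum>k\<in>K. g k n) = (\<Sum>k\<in>K. inner N f (g k))"
  unfolding inner_def by (simp add: cnj_sum sum_distrib_left sum.swap[of _ K])

lemma heis_unitary:
  assumes "N > 0"
  shows "inner N (heis N v f) (heis N v g) = inner N f g"
proof -
  have "inner N (heis N v f) (heis N v g)
      = (\<Sum>n\<in>{0..<int N}. (\<lambda>n. f n * cnj (g n)) ((n - fst v) mod int N))"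
    unfolding inner_def heis_def
  proof (rule sum.cong[OF refl])
    fix n
    let ?A = "ee N (- (inv2 N * fst v * snd v))" and ?B = "ee N (snd v * n)"
      and ?n = "(n - fst v) mod int N"
    have "?A * ?B * f ?n * cnj (?A * ?B * g ?n) = (?A * cnj ?A) * (?B * cnj ?B) * (f ?n * cnj (g ?n))"
      by (simp add: mult_ac)
    then show "?A * ?B * f ?n * cnj (?A * ?B * g ?n) = (\<lambda>n. f n * cnj (g n)) ?n"
      by (simp add: ee_mult_cnj)
  qed
  also have "\<dots> = inner N f g"
    unfolding inner_def by (rule sum_mod_shift[OF assms])
  finally show ?thesis .
qed

lemma channel_eq_sum_heis:
  "channel N r \<alpha> \<tau> \<omega> S
     = (\<lambda>n. \<Sum>k=1..r. (\<alpha> k * ee N (inv2 N * \<tau> k * \<omega> k)) * heis N (\<tau> k, \<omega> k) S n)"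
  unfolding channel_def heis_def
proof (rule ext, rule sum.cong[OF refl])
  fix n k
  have "ee N (inv2 N * \<tau> k * \<omega> k) * ee N (- (inv2 N * \<tau> k * \<omega> k)) = 1"
    by (metis ee_minus mult.commute)
  then show "\<alpha> k * ee N (\<omega> k * n) * S ((n - \<tau> k) mod int N) =
    \<alpha> k * ee N (inv2 N * \<tau> k * \<omega> k) *
    (ee N (- (inv2 N * fst (\<tau> k, \<omega> k) * snd (\<tau> k, \<omega> k))) * ee N (snd (\<tau> k, \<omega> k) * n) *
     S ((n - fst (\<tau> k, \<omega> k)) mod int N))"
    by (simp add: mult_ac)
qed

lemma chirp_inner_self:
  assumes "N > 0" "C \<in> chirp_basis N L"
  shows "inner N C C = 1"
proof -
  obtain b where b: "0 \<le> b" "b < int N" "C = chirp N L b"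
    using assms(2) unfolding chirp_basis_def by blast
  show ?thesis
  proof (cases L)
    case (LFin a)
    have "C n * cnj (C n) = 1 / of_nat N" for n
    proof -
      have "C n * cnj (C n) = ee N (inv2 N * a * n^2 - b * n) * cnj (ee N (inv2 N * a * n^2 - b * n))
              / (complex_of_real (sqrt (real N)) * complex_of_real (sqrt (real N)))"
        using b LFin by (simp add: chirp_def)
      also have "\<dots> = 1 / of_nat N"
        using assms(1) by (simp add: ee_mult_cnj flip: of_real_mult)
      finally show ?thesis .
    qed
    then show ?thesis
      unfolding inner_def using assms(1) by simp
  next
    case LInf
    have "inner N C C = (\<Sum>n\<in>{0..<int N}. if n = b then 1 else 0)"
      unfolding inner_def
      by (rule sum.cong[OF refl]) (use b LInf in \<open>auto simp: chirp_def\<close>)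
    then show ?thesis
      using b by simp
  qed
qed

lemma line_set_diff_orthogonal:
  assumes "N > 1" "valid_line N L" "\<forall>x\<in>line_set N L. int N dvd Omega x w" "l \<in> line_set N L"
  shows "((fst l - fst w) mod int N, (snd l - snd w) mod int N) \<in> line_set N L"
proof (cases L)
  case (LFin a)
  have "0 \<le> a" "a < int N"
    using assms(2) LFin by (auto simp: valid_line_def)
  then have "(1, a) \<in> line_set N L"
    using assms(1) LFin by (auto simp: line_set_def)
  then have d: "int N dvd snd w - a * fst w"
    using assms(3) by (auto simp: Omega_def)
  obtain t where t: "l = (t, (a * t) mod int N)" "0 \<le> t" "t < int N"
    using assms(4) LFin by (auto simp: line_set_def)
  define t' where "t' = (t - fst w) mod int N"
  have "((a * t) mod int N - snd w) mod int N = (a * t - snd w) mod int N"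
    by (simp add: mod_diff_left_eq)
  also have "\<dots> = (a * (t - fst w)) mod int N"
  proof -
    have "(a * t - snd w) - a * (t - fst w) = - (snd w - a * fst w)"
      by (simp add: algebra_simps)
    then show ?thesis
      using d by (metis dvd_minus_iff mod_eq_dvd_iff)
  qed
  also have "\<dots> = (a * t') mod int N"
    unfolding t'_def by (simp add: mod_mult_right_eq)
  finally have "((a * t) mod int N - snd w) mod int N = (a * t') mod int N" .
  moreover have "0 \<le> t'" "t' < int N"
    using assms(1) by (auto simp: t'_def)
  moreover have "((fst l - fst w) mod int N, (snd l - snd w) mod int N) = (t', (a * t') mod int N)"
    using t calculation by (simp add: t'_def)
  ultimately show ?thesis
    unfolding LFin line_set_def line.case by blast
next
  case LInf
  have "(0, 1) \<in> line_set N L"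
    using assms(1) LInf by (auto simp: line_set_def)
  then have "int N dvd fst w"
    using assms(3) by (auto simp: Omega_def)
  moreover obtain s where "l = (0, s)" "0 \<le> s" "s < int N"
    using assms(4) LInf by (auto simp: line_set_def)
  ultimately show ?thesis
    using assms(1) LInf unfolding line_set_def by auto
qed

definition unit_line_eigenvector ::
    "nat \<Rightarrow> line \<Rightarrow> (int \<times> int \<Rightarrow> complex) \<Rightarrow> (int \<Rightarrow> complex) \<Rightarrow> bool" where
  "unit_line_eigenvector N L \<psi> C \<longleftrightarrow>
     inner N C C = 1 \<and> (\<forall>x\<in>line_set N L. heis N x C = (\<lambda>n. \<psi> x * C n))"

lemma unit_line_eigenvector_character:
  assumes "N > 0" "unit_line_eigenvector N L \<psi> C" "x \<in> line_set N L"
  shows "\<psi> x * cnj (\<psi> x) = 1"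
proof -
  have "1 = inner N (heis N x C) (heis N x C)"
    using heis_unitary[OF assms(1)] assms(2) by (simp add: unit_line_eigenvector_def)
  also have "\<dots> = \<psi> x * cnj (\<psi> x)"
    using assms(2,3) by (simp add: unit_line_eigenvector_def inner_scale_left inner_scale_right)
  finally show ?thesis by simp
qed

lemma heis_unit_line_eigenvector_commute:
  assumes "N > 0" "unit_line_eigenvector N L \<psi> C" "x \<in> line_set N L"
  shows "heis N x (heis N a C) = (\<lambda>n. (ee N (- Omega x a) * \<psi> x) * heis N a C n)"
proof -
  have eig: "heis N x C = (\<lambda>n. \<psi> x * C n)"
    using assms(2,3) unfolding unit_line_eigenvector_def by blast
  show ?thesis
  proof (rule ext)
    fix n
    have "heis N a (heis N x C) n = \<psi> x * heis N a C n"
      unfolding eig heis_scale ..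
    then show "heis N x (heis N a C) n = (ee N (- Omega x a) * \<psi> x) * heis N a C n"
      using heis_commute[OF assms(1), of x a C n] by simp
  qed
qed

lemma inner_heis_unit_line_eigenvector_phase:
  assumes "N > 0" "unit_line_eigenvector N L \<psi> C" "x \<in> line_set N L"
  shows "inner N (heis N a C) (heis N b C)
           = ee N (Omega x b - Omega x a) * inner N (heis N a C) (heis N b C)"
proof -
  have "inner N (heis N a C) (heis N b C) = inner N (heis N x (heis N a C)) (heis N x (heis N b C))"
    using heis_unitary[OF assms(1)] by simp
  also have "\<dots> = (ee N (- Omega x a) * cnj (ee N (- Omega x b))) * (\<psi> x * cnj (\<psi> x))
                    * inner N (heis N a C) (heis N b C)"
    unfolding heis_unit_line_eigenvector_commute[OF assms] inner_scale_left inner_scale_right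
    by (simp add: mult_ac)
  also have "ee N (- Omega x a) * cnj (ee N (- Omega x b)) = ee N (Omega x b - Omega x a)"
    by (simp add: ee_cnj flip: ee_add)
  also have "\<psi> x * cnj (\<psi> x) = 1"
    by (rule unit_line_eigenvector_character[OF assms])
  finally show ?thesis by simp
qed

lemma inner_heis_unit_line_eigenvector_eq_0:
  assumes "N > 0" "unit_line_eigenvector N L \<psi> C" "x \<in> line_set N L"
    and "\<not> int N dvd Omega x b - Omega x a"
  shows "inner N (heis N a C) (heis N b C) = 0"
  using inner_heis_unit_line_eigenvector_phase[OF assms(1-3), of a b] ee_neq_1[OF assms(1,4)]
  by (metis mult_cancel_right1)

lemma inner_heis_unit_line_eigenvector_vadd:
  assumes "N > 0" "unit_line_eigenvector N L \<psi> C" "x \<in> line_set N L"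
  shows "inner N (heis N y C) (heis N (vadd N y x) C) = ee N (heis_cocycle N y x) * cnj (\<psi> x)"
proof -
  have "heis N (vadd N y x) C = (\<lambda>n. (ee N (- heis_cocycle N y x) * \<psi> x) * heis N y C n)"
  proof (rule ext)
    fix n
    have "\<psi> x * heis N y C n = ee N (heis_cocycle N y x) * heis N (vadd N y x) C n"
      using assms(2,3) heis_comp[OF assms(1), of y x C n]
      by (simp add: unit_line_eigenvector_def heis_scale)
    then show "heis N (vadd N y x) C n = (ee N (- heis_cocycle N y x) * \<psi> x) * heis N y C n"
      by (metis ee_minus mult.assoc mult_1)
  qed
  then have "inner N (heis N y C) (heis N (vadd N y x) C)
      = cnj (ee N (- heis_cocycle N y x) * \<psi> x) * inner N (heis N y C) (heis N y C)"
    by (simp only: inner_scale_right)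
  also have "inner N (heis N y C) (heis N y C) = 1"
    using heis_unitary[OF assms(1)] assms(2) by (simp add: unit_line_eigenvector_def)
  finally show ?thesis
    by (simp add: ee_cnj)
qed

text \<open>The symplectic complement of a line is the line itself, so a translate \<open>\<pi>(b)C\<close> that is
  not orthogonal to \<open>\<pi>(y)C\<close> forces \<open>x + y - b \<in> L\<close>; genericity excludes this.\<close>

lemma inner_heis_unit_line_eigenvector_generic:
  assumes "N > 1" "valid_line N L" "unit_line_eigenvector N L \<psi> C" "generic N S L"
    and "x \<in> line_set N L" "vadd N x y \<in> S" "b \<in> S" "b \<noteq> vadd N x y"
  shows "inner N (heis N y C) (heis N b C) = 0"
proof (rule ccontr)
  assume nonzero: "inner N (heis N y C) (heis N b C) \<noteq> 0"
  define w where "w = (fst b - fst y, snd b - snd y)"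
  have "int N dvd Omega x' w" if "x' \<in> line_set N L" for x'
  proof -
    have "Omega x' w = Omega x' b - Omega x' y"
      unfolding w_def Omega_def by (simp add: algebra_simps)
    moreover have "int N dvd Omega x' b - Omega x' y"
      using inner_heis_unit_line_eigenvector_eq_0[OF _ assms(3) that, of b y] assms(1) nonzero
      by fastforce
    ultimately show ?thesis
      by simp
  qed
  then have "((fst x - fst w) mod int N, (snd x - snd w) mod int N) \<in> line_set N L"
    using line_set_diff_orthogonal[OF assms(1,2) _ assms(5)] by blast
  moreover have "vsub N (vadd N x y) b = ((fst x - fst w) mod int N, (snd x - snd w) mod int N)"
    unfolding vsub_def vadd_def w_def by (simp add: mod_diff_left_eq algebra_simps)
  ultimately have "vsub N (vadd N x y) b \<in> line_set N L"
    by (simp only:)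
  moreover have "vsub N (vadd N x y) b \<notin> line_set N L"
    using assms(4,6,7,8) unfolding generic_def by simp
  ultimately show False
    by contradiction
qed

lemma ambig_channel_unit_line_eigenvector:
  assumes "N > 1" "valid_line N L" "unit_line_eigenvector N L \<psi> C"
    and "generic N (chsupp N r \<tau> \<omega>) L" "x \<in> line_set N L" "vadd N x y \<in> chsupp N r \<tau> \<omega>"
  shows "ambig N C (channel N r \<alpha> \<tau> \<omega> C) y
           = (\<Sum>k | k \<in> {1..r} \<and> (\<tau> k mod int N, \<omega> k mod int N) = vadd N x y.
                cnj (\<alpha> k * ee N (inv2 N * \<tau> k * \<omega> k)))
             * ee N (heis_cocycle N y x) * cnj (\<psi> x)"
proof -
  have N0: "N > 0" using assms(1) by simp
  define c where "c k = \<alpha> k * ee N (inv2 N * \<tau> k * \<omega> k)" for k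
  define v where "v k = (\<tau> k mod int N, \<omega> k mod int N)" for k
  have summand: "cnj (c k) * inner N (heis N y C) (heis N (\<tau> k, \<omega> k) C)
      = (if v k = vadd N x y then cnj (c k) * (ee N (heis_cocycle N y x) * cnj (\<psi> x)) else 0)"
    if "k \<in> {1..r}" for k
  proof -
    have heis_v: "heis N (\<tau> k, \<omega> k) = heis N (v k)"
      unfolding v_def using heis_mod[OF N0, of "(\<tau> k, \<omega> k)"] by simp
    have "v k \<in> chsupp N r \<tau> \<omega>"
      using that unfolding v_def chsupp_def by blast
    then show ?thesis
      using inner_heis_unit_line_eigenvector_vadd[OF N0 assms(3,5), of y]
        inner_heis_unit_line_eigenvector_generic[OF assms(1-5) assms(6)]
      by (auto simp: heis_v vadd_commute)
  qed
  have "ambig N C (channel N r \<alpha> \<tau> \<omega> C) y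
      = (\<Sum>k=1..r. cnj (c k) * inner N (heis N y C) (heis N (\<tau> k, \<omega> k) C))"
    unfolding ambig_def channel_eq_sum_heis inner_sum_right inner_scale_right c_def ..
  also have "\<dots> = (\<Sum>k\<in>{1..r}. if v k = vadd N x y
                     then cnj (c k) * (ee N (heis_cocycle N y x) * cnj (\<psi> x)) else 0)"
    using summand by (rule sum.cong[OF refl])
  also have "\<dots> = (\<Sum>k | k \<in> {1..r} \<and> v k = vadd N x y. cnj (c k))
                   * ee N (heis_cocycle N y x) * cnj (\<psi> x)"
    by (simp add: sum.inter_filter[symmetric] sum_distrib_right mult.assoc)
  finally show ?thesis
    unfolding c_def v_def .
qed

theorem mainTheorem4:
  fixes N r :: nat and \<alpha> :: "nat \<Rightarrow> complex" and \<tau> \<omega> :: "nat \<Rightarrow> int"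
    and L M :: line and CL CM :: "int \<Rightarrow> complex"
    and \<psi>L \<psi>M :: "int \<times> int \<Rightarrow> complex" and l m :: "int \<times> int"
  assumes "prime N" and "odd N"
    and "(\<Sum>k=1..r. (cmod (\<alpha> k))^2) \<le> 1"
    and "valid_line N L" and "valid_line N M" and "L \<noteq> M"
    and "generic N (chsupp N r \<tau> \<omega>) L" and "generic N (chsupp N r \<tau> \<omega>) M"
    and "CL \<in> chirp_basis N L" and "CM \<in> chirp_basis N M"
    and "\<forall>x\<in>line_set N L. heis N x CL = (\<lambda>n. \<psi>L x * CL n)"
    and "\<forall>y\<in>line_set N M. heis N y CM = (\<lambda>n. \<psi>M y * CM n)"
    and "l \<in> line_set N L" and "m \<in> line_set N M"
    and "vadd N l m \<in> chsupp N r \<tau> \<omega>"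
  shows "ambig N CL (channel N r \<alpha> \<tau> \<omega> CL) m * \<psi>L l
         - ambig N CM (channel N r \<alpha> \<tau> \<omega> CM) l * ee N (Omega l m) * \<psi>M m = 0"
proof -
  have N1: "N > 1" using assms(1) prime_gt_1_nat by blast
  have eigL: "unit_line_eigenvector N L \<psi>L CL" and eigM: "unit_line_eigenvector N M \<psi>M CM"
    using assms(9-12) chirp_inner_self N1 by (simp_all add: unit_line_eigenvector_def)
  define K where "K = (\<Sum>k | k \<in> {1..r} \<and> (\<tau> k mod int N, \<omega> k mod int N) = vadd N l m.
                         cnj (\<alpha> k * ee N (inv2 N * \<tau> k * \<omega> k)))"
  have "ambig N CL (channel N r \<alpha> \<tau> \<omega> CL) m * \<psi>L l
      = K * ee N (heis_cocycle N m l) * (\<psi>L l * cnj (\<psi>L l))"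
    using ambig_channel_unit_line_eigenvector[OF N1 assms(4) eigL assms(7,13,15)]
    by (simp add: K_def mult_ac)
  moreover have "ambig N CM (channel N r \<alpha> \<tau> \<omega> CM) l * ee N (Omega l m) * \<psi>M m
      = K * ee N (heis_cocycle N l m + Omega l m) * (\<psi>M m * cnj (\<psi>M m))"
    using ambig_channel_unit_line_eigenvector[OF N1 assms(5) eigM assms(8,14), of l]
      assms(15) by (simp add: K_def vadd_commute ee_add mult_ac)
  ultimately show ?thesis
    using unit_line_eigenvector_character[OF _ eigL assms(13)]
      unit_line_eigenvector_character[OF _ eigM assms(14)] N1
    by (simp add: heis_cocycle_swap)
qed

end
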